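(* If $M$ and $N$ are transversal matroids on disjoint finite sets, then the free product $M\mathbin{\Box} N$ is a transversal matroid.
   Context: For a matroid $M$ on $S$ write $\rho_M$ for rank, $\rho(M)=\rho_M(S)$, $\nu_M(A)=|A|-\rho_M(A)$, $\lambda_M(A)=\rho(M)-\rho_M(A)$. For matroids $M$ on $S$ and $N$ on $T$ with $S\cap T=\emptyset$, the free product $M\mathbin{\Box} N$ is the matroid on $S\cup T$ whose independent sets are those $A$ with $A\cap S$ independent in $M$ and $\lambda_M(A\cap S)\geq\nu_N(A\cap T)$. Given an indexed family $\{A_i: i\in I\}$ of subsets of a set $S$ (repetitions allowed), a partial transversal is a set $A\subseteq S$ admitting an injection $f:A\to I$ with $a\in A_{f(a)}$ for all $a\in A$; a transversal matroid is a matroid whose independent sets are exactly the partial transversals of some such family. *)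

theory Defs
  imports Main
begin

definition matroid :: "'a set \<Rightarrow> ('a set \<Rightarrow> bool) \<Rightarrow> bool" where
  "matroid S indep \<longleftrightarrow>
     finite S \<and>
     (\<forall>X. indep X \<longrightarrow> X \<subseteq> S) \<and>
     indep {} \<and>
     (\<forall>X Y. indep X \<and> Y \<subseteq> X \<longrightarrow> indep Y) \<and>
     (\<forall>X Y. indep X \<and> indep Y \<and> card X < card Y \<longrightarrow> (\<exists>y\<in>Y - X. indep (insert y X)))"

definition mrank :: "('a set \<Rightarrow> bool) \<Rightarrow> 'a set \<Rightarrow> nat" where
  "mrank indep A = Max (card ` {B. B \<subseteq> A \<and> indep B})"

definition mnullity :: "('a set \<Rightarrow> bool) \<Rightarrow> 'a set \<Rightarrow> nat" where
  "mnullity indep A = card A - mrank indep A"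

definition mlambda :: "'a set \<Rightarrow> ('a set \<Rightarrow> bool) \<Rightarrow> 'a set \<Rightarrow> nat" where
  "mlambda S indep A = mrank indep S - mrank indep A"

definition free_product ::
  "'a set \<Rightarrow> ('a set \<Rightarrow> bool) \<Rightarrow> 'a set \<Rightarrow> ('a set \<Rightarrow> bool) \<Rightarrow> 'a set \<Rightarrow> bool" where
  "free_product S indM T indN A \<longleftrightarrow>
     A \<subseteq> S \<union> T \<and> indM (A \<inter> S) \<and> mnullity indN (A \<inter> T) \<le> mlambda S indM (A \<inter> S)"

definition partial_transversal :: "'i set \<Rightarrow> ('i \<Rightarrow> 'a set) \<Rightarrow> 'a set \<Rightarrow> bool" where
  "partial_transversal I F A \<longleftrightarrow>
     (\<exists>f. inj_on f A \<and> f ` A \<subseteq> I \<and> (\<forall>a\<in>A. a \<in> F (f a)))"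

definition transversal_matroid :: "'a set \<Rightarrow> ('a set \<Rightarrow> bool) \<Rightarrow> bool" where
  "transversal_matroid S indep \<longleftrightarrow>
     matroid S indep \<and>
     (\<exists>(I::nat set) F. (\<forall>i\<in>I. F i \<subseteq> S) \<and>
        (\<forall>A. indep A \<longleftrightarrow> A \<subseteq> S \<and> partial_transversal I F A))"

end

(* A transversal matroid M of rank r on S has a presentation by exactly r sets (F j), j in J:
   the sets used by a matching of one basis suffice, because by an exchange argument every basis
   can be rematched onto them.  With a presentation (G i), i in I, of N, the free product is
   presented by the sets F j Un T (j in J) together with the sets G i (i in I).  A partial
   transversal A of this family splits into a part A1 matched to the first kind of sets and a part
   A2 matched to the second.  A2 is independent in N, so nu_N(A Int T) <= |A1 Int T|, while A1 Int T
   occupies indices of J not used by A Int S, so |A1 Int T| <= |J| - |A Int S| = lambda_M(A Int S).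
   Conversely, taking for A2 a basis of A Int T leaves nu_N(A Int T) elements of T, which fit into
   the lambda_M(A Int S) sets F j Un T left unused by A Int S. *)

theory Submission
  imports Defs "HOL-Library.Countable"
begin

definition matching :: "'i set \<Rightarrow> ('i \<Rightarrow> 'a set) \<Rightarrow> 'a set \<Rightarrow> ('a \<Rightarrow> 'i) \<Rightarrow> bool" where
  "matching I F A f \<longleftrightarrow> inj_on f A \<and> f ` A \<subseteq> I \<and> (\<forall>a\<in>A. a \<in> F (f a))"

lemma partial_transversal_iff_matching:
  "partial_transversal I F A \<longleftrightarrow> (\<exists>f. matching I F A f)"
  unfolding partial_transversal_def matching_def by blast

lemma matching_subset: "matching I F A f \<Longrightarrow> B \<subseteq> A \<Longrightarrow> matching I F B f"
  unfolding matching_def by (auto intro: inj_on_subset)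

lemma matching_card_image: "matching I F A f \<Longrightarrow> card (f ` A) = card A"
  unfolding matching_def by (simp add: card_image)

lemma matching_fun_upd:
  assumes "matching I F A f" "a \<notin> A" "i \<in> I" "a \<in> F i" "i \<notin> f ` A"
  shows "matching I F (insert a A) (f(a := i))"
proof -
  have "inj_on (f(a := i)) A" "(f(a := i)) ` A = f ` A"
    using assms(1,2) unfolding matching_def by (auto simp: inj_on_def)
  then show ?thesis using assms unfolding matching_def by auto
qed

lemma partial_transversal_subset:
  "partial_transversal I F A \<Longrightarrow> B \<subseteq> A \<Longrightarrow> partial_transversal I F B"
  unfolding partial_transversal_iff_matching by (metis matching_subset)

lemma partial_transversal_mono_index:
  "partial_transversal J F A \<Longrightarrow> J \<subseteq> I \<Longrightarrow> partial_transversal I F A"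
  unfolding partial_transversal_def by blast

lemma partial_transversal_subset_Union:
  "partial_transversal I F A \<Longrightarrow> A \<subseteq> (\<Union>i\<in>I. F i)"
  unfolding partial_transversal_def by blast

text \<open>Among all matchings of \<open>A\<close> take one agreeing with \<open>g\<close> on as much of \<open>A \<inter> B\<close> as
  possible; if it missed some \<open>g a\<close>, redirecting \<open>a\<close> to \<open>g a\<close> would agree on more.\<close>
lemma matching_exchange:
  assumes "finite A" "matching I F A f" "matching I F B g"
  obtains h where "matching I F A h" "g ` (A \<inter> B) \<subseteq> h ` A"
proof -
  define agree where "agree h = card {a \<in> A \<inter> B. h a = g a}" for h
  have "\<exists>h. matching I F A h \<and> (\<forall>h'. matching I F A h' \<longrightarrow> agree h' \<le> agree h)"
  proof (rule ex_has_greatest_nat)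
    show "matching I F A f" by (fact assms(2))
    show "\<forall>h. matching I F A h \<longrightarrow> agree h < Suc (card A)"
      unfolding agree_def using assms(1) by (auto intro!: le_imp_less_Suc card_mono)
  qed
  then obtain h where h: "matching I F A h"
    and h_max: "\<And>h'. matching I F A h' \<Longrightarrow> agree h' \<le> agree h" by blast
  have "g a \<in> h ` A" if a: "a \<in> A" "a \<in> B" for a
  proof (rule ccontr)
    assume g_a: "g a \<notin> h ` A"
    have "matching I F (insert a (A - {a})) (h(a := g a))"
      using matching_subset[OF h] g_a assms(3) a
      by (intro matching_fun_upd) (auto simp: matching_def)
    then have "matching I F A (h(a := g a))" using a by (simp add: insert_absorb)
    moreover have "{b \<in> A \<inter> B. (h(a := g a)) b = g b} = insert a {b \<in> A \<inter> B. h b = g b}"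
      using a by auto
    moreover have "a \<notin> {b \<in> A \<inter> B. h b = g b}"
      using a g_a by (auto simp: image_iff)
    ultimately have "Suc (agree h) \<le> agree h"
      using h_max[of "h(a := g a)"] assms(1) unfolding agree_def by simp
    then show False by simp
  qed
  with h that show thesis by blast
qed

lemma partial_transversal_augment_or_cover:
  assumes "finite A" "partial_transversal I F A" "matching I F B g"
  shows "(\<exists>b\<in>B - A. partial_transversal I F (insert b A)) \<or> (\<exists>h. matching I F A h \<and> g ` B \<subseteq> h ` A)"
proof -
  obtain f where "matching I F A f" using assms(2) partial_transversal_iff_matching by blast
  then obtain h where h: "matching I F A h" "g ` (A \<inter> B) \<subseteq> h ` A"
    using matching_exchange assms(1,3) by metis
  show ?thesis
  proof (cases "g ` B \<subseteq> h ` A")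
    case False
    then obtain b where b: "b \<in> B" "g b \<notin> h ` A" by blast
    with h(2) have "b \<notin> A" by blast
    with b h(1) assms(3) have "matching I F (insert b A) (h(b := g b))"
      by (intro matching_fun_upd) (auto simp: matching_def)
    with b \<open>b \<notin> A\<close> show ?thesis unfolding partial_transversal_iff_matching by blast
  qed (use h in blast)
qed

lemma partial_transversal_augment:
  assumes "finite A" "partial_transversal I F A" "partial_transversal I F B" "card A < card B"
  shows "\<exists>b\<in>B - A. partial_transversal I F (insert b A)"
proof -
  obtain g where g: "matching I F B g" using assms(3) partial_transversal_iff_matching by blast
  have "\<not> g ` B \<subseteq> h ` A" for h
    using card_mono[OF finite_imageI[OF assms(1)], of "g ` B" h] card_image_le[OF assms(1), of h]
      matching_card_image[OF g] assms(4) by linarith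
  then show ?thesis using partial_transversal_augment_or_cover[OF assms(1,2) g] by blast
qed

lemma matroid_partial_transversals:
  assumes "finite E" and ind: "\<And>A. ind A \<longleftrightarrow> A \<subseteq> E \<and> partial_transversal I F A"
  shows "matroid E ind"
proof -
  have "\<forall>A. ind A \<longrightarrow> A \<subseteq> E" unfolding ind by blast
  moreover have "ind {}" unfolding ind by (simp add: partial_transversal_def)
  moreover have "\<forall>A B. ind A \<and> B \<subseteq> A \<longrightarrow> ind B"
    unfolding ind by (auto intro: partial_transversal_subset)
  moreover have "\<forall>A B. ind A \<and> ind B \<and> card A < card B \<longrightarrow> (\<exists>b\<in>B - A. ind (insert b A))"
    unfolding ind
  proof (intro allI impI, elim conjE)
    fix A B
    assume "A \<subseteq> E" "B \<subseteq> E" "partial_transversal I F A" "partial_transversal I F B"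
      "card A < card B"
    then show "\<exists>b\<in>B - A. insert b A \<subseteq> E \<and> partial_transversal I F (insert b A)"
      using partial_transversal_augment[OF finite_subset[OF _ assms(1)]] by blast
  qed
  ultimately show ?thesis unfolding matroid_def using assms(1) by (intro conjI) assumption+
qed

lemma
  assumes "matroid E ind"
  shows matroid_finite: "finite E"
    and matroid_indep_subset: "ind A \<Longrightarrow> A \<subseteq> E"
    and matroid_indep_empty: "ind {}"
    and matroid_augment: "ind A \<Longrightarrow> ind B \<Longrightarrow> card A < card B \<Longrightarrow> \<exists>b\<in>B - A. ind (insert b A)"
  using assms unfolding matroid_def by (elim conjE; blast)+

lemma matroid_finite_indep: "matroid E ind \<Longrightarrow> ind A \<Longrightarrow> finite A"
  using matroid_finite matroid_indep_subset finite_subset by metis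

lemma finite_indep_subsets: "matroid E ind \<Longrightarrow> finite {B. B \<subseteq> A \<and> ind B}"
  by (rule finite_subset[of _ "Pow E"]) (auto dest: matroid_indep_subset simp: matroid_finite)

lemma card_le_mrank:
  assumes "matroid E ind" "B \<subseteq> A" "ind B"
  shows "card B \<le> mrank ind A"
  unfolding mrank_def
proof (rule Max_ge)
  show "finite (card ` {B. B \<subseteq> A \<and> ind B})" using finite_indep_subsets[OF assms(1)] by simp
  show "card B \<in> card ` {B. B \<subseteq> A \<and> ind B}" using assms(2,3) by (intro imageI) simp
qed

lemma obtain_indep_card_mrank:
  assumes "matroid E ind"
  obtains B where "B \<subseteq> A" "ind B" "card B = mrank ind A"
proof -
  have "mrank ind A \<in> card ` {B. B \<subseteq> A \<and> ind B}"
    unfolding mrank_def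
  proof (rule Max_in)
    show "finite (card ` {B. B \<subseteq> A \<and> ind B})" using finite_indep_subsets[OF assms] by simp
    show "card ` {B. B \<subseteq> A \<and> ind B} \<noteq> {}" using matroid_indep_empty[OF assms] by blast
  qed
  then show thesis using that by auto
qed

lemma mrank_indep:
  assumes M: "matroid E ind" and "ind A"
  shows "mrank ind A = card A"
proof (rule antisym)
  obtain B where "B \<subseteq> A" "card B = mrank ind A" using obtain_indep_card_mrank[OF M] by metis
  then show "mrank ind A \<le> card A" using card_mono[OF matroid_finite_indep[OF assms]] by metis
  show "card A \<le> mrank ind A" using card_le_mrank[OF M order_refl \<open>ind A\<close>] .
qed

lemma indep_extend_to_rank:
  assumes M: "matroid E ind" and "ind A"
  obtains B where "A \<subseteq> B" "ind B" "card B = mrank ind E"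
proof -
  have "\<exists>B. (A \<subseteq> B \<and> ind B) \<and> (\<forall>B'. A \<subseteq> B' \<and> ind B' \<longrightarrow> card B' \<le> card B)"
  proof (rule ex_has_greatest_nat)
    show "A \<subseteq> A \<and> ind A" using \<open>ind A\<close> by simp
    show "\<forall>B. A \<subseteq> B \<and> ind B \<longrightarrow> card B < Suc (mrank ind E)"
      using card_le_mrank[OF M matroid_indep_subset[OF M]] by (simp add: le_imp_less_Suc)
  qed
  then obtain B where B: "A \<subseteq> B" "ind B" and B_max: "\<And>B'. A \<subseteq> B' \<Longrightarrow> ind B' \<Longrightarrow> card B' \<le> card B"
    by blast
  obtain C where C: "ind C" "card C = mrank ind E" using obtain_indep_card_mrank[OF M] by metis
  have "card B = mrank ind E"
  proof (rule ccontr)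
    assume "card B \<noteq> mrank ind E"
    then have "card B < card C"
      using C card_le_mrank[OF M matroid_indep_subset[OF M B(2)] B(2)] by simp
    then obtain c where "c \<in> C - B" "ind (insert c B)"
      using matroid_augment[OF M B(2) C(1)] by blast
    then show False
      using B_max[of "insert c B"] B matroid_finite_indep[OF M B(2)] by auto
  qed
  with B that show thesis by blast
qed

lemma rematch_basis_onto_image:
  assumes M: "matroid E ind" and ind: "\<And>A. ind A \<longleftrightarrow> A \<subseteq> E \<and> partial_transversal I F A"
    and B: "ind B" "card B = mrank ind E" and g: "matching I F B g"
    and B': "ind B'" "card B' = mrank ind E"
  obtains h where "matching I F B' h" "h ` B' = g ` B"
proof -
  have fin: "finite B'" using matroid_finite_indep[OF M B'(1)] .
  have "\<not> partial_transversal I F (insert b B')" if "b \<in> B - B'" for b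
    using that card_le_mrank[OF M, of "insert b B'" E] B B' fin ind by auto
  then obtain h where h: "matching I F B' h" "g ` B \<subseteq> h ` B'"
    using partial_transversal_augment_or_cover[OF fin _ g] B'(1) ind by blast
  have "card (g ` B) = card (h ` B')"
    using matching_card_image[OF g] matching_card_image[OF h(1)] B(2) B'(2) by simp
  then have "g ` B = h ` B'" by (rule card_subset_eq[OF finite_imageI[OF fin] h(2)])
  with h(1) that show thesis by simp
qed

text \<open>The sets matched to one fixed basis suffice: every basis can be rematched onto them.\<close>
lemma transversal_matroid_rank_presentation:
  assumes "transversal_matroid E ind"
  obtains J :: "nat set" and F where "finite J" "card J = mrank ind E" "\<forall>j\<in>J. F j \<subseteq> E"
    "\<And>A. ind A \<longleftrightarrow> A \<subseteq> E \<and> partial_transversal J F A"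
proof -
  obtain I :: "nat set" and F where M: "matroid E ind" and F: "\<forall>i\<in>I. F i \<subseteq> E"
    and ind: "\<And>A. ind A \<longleftrightarrow> A \<subseteq> E \<and> partial_transversal I F A"
    using assms unfolding transversal_matroid_def by blast
  obtain B where B: "ind B" "card B = mrank ind E" using obtain_indep_card_mrank[OF M] by metis
  obtain g where g: "matching I F B g" using B(1) ind partial_transversal_iff_matching by blast
  define J where "J = g ` B"
  have "J \<subseteq> I" using g unfolding J_def matching_def by blast
  have "finite J" using matroid_finite_indep[OF M B(1)] unfolding J_def by blast
  have card_J: "card J = mrank ind E" using matching_card_image[OF g] B(2) unfolding J_def by simp
  have "partial_transversal J F A" if "ind A" for A
  proof -
    obtain B' where B': "A \<subseteq> B'" "ind B'" "card B' = mrank ind E"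
      using indep_extend_to_rank[OF M \<open>ind A\<close>] by metis
    obtain h where h: "matching I F B' h" "h ` B' = J"
      using rematch_basis_onto_image[OF M ind B g B'(2,3)] unfolding J_def by metis
    then have "matching J F A h"
      using matching_subset[OF h(1) B'(1)] B'(1) unfolding matching_def by blast
    then show ?thesis using partial_transversal_iff_matching by blast
  qed
  then have "ind A \<longleftrightarrow> A \<subseteq> E \<and> partial_transversal J F A" for A
    using ind[of A] partial_transversal_mono_index[OF _ \<open>J \<subseteq> I\<close>, of F A] by blast
  moreover have "\<forall>j\<in>J. F j \<subseteq> E" using F \<open>J \<subseteq> I\<close> by blast
  ultimately show thesis using that[OF \<open>finite J\<close> card_J] by blast
qed

lemma matching_Plus_Inl:
  assumes "matching (I <+> J) (case_sum F G) A h"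
  shows "matching I F {a \<in> A. isl (h a)} (projl \<circ> h)"
  unfolding matching_def
proof (intro conjI ballI)
  have Inl: "h a = Inl (projl (h a))" if "a \<in> {a \<in> A. isl (h a)}" for a
    using that by simp
  show "inj_on (projl \<circ> h) {a \<in> A. isl (h a)}"
    using assms unfolding matching_def by (intro inj_onI) (metis Inl comp_apply inj_onD mem_Collect_eq)
  show "(projl \<circ> h) ` {a \<in> A. isl (h a)} \<subseteq> I"
    using assms Inl unfolding matching_def by (force simp: Plus_def)
  show "a \<in> F ((projl \<circ> h) a)" if "a \<in> {a \<in> A. isl (h a)}" for a
    using assms Inl[OF that] that unfolding matching_def by (metis (no_types, lifting) comp_apply mem_Collect_eq sum.case(1))
qed

lemma matching_Plus_Inr:
  assumes "matching (I <+> J) (case_sum F G) A h"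
  shows "matching J G {a \<in> A. \<not> isl (h a)} (projr \<circ> h)"
  unfolding matching_def
proof (intro conjI ballI)
  have Inr: "h a = Inr (projr (h a))" if "a \<in> {a \<in> A. \<not> isl (h a)}" for a
    using that by simp
  show "inj_on (projr \<circ> h) {a \<in> A. \<not> isl (h a)}"
    using assms unfolding matching_def by (intro inj_onI) (metis Inr comp_apply inj_onD mem_Collect_eq)
  show "(projr \<circ> h) ` {a \<in> A. \<not> isl (h a)} \<subseteq> J"
    using assms Inr unfolding matching_def by (force simp: Plus_def)
  show "a \<in> G ((projr \<circ> h) a)" if "a \<in> {a \<in> A. \<not> isl (h a)}" for a
    using assms Inr[OF that] that unfolding matching_def by (metis (no_types, lifting) comp_apply mem_Collect_eq sum.case(2))
qed

lemma partial_transversal_Plus: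
  "partial_transversal (I <+> J) (case_sum F G) A \<longleftrightarrow>
    (\<exists>A1 A2. A = A1 \<union> A2 \<and> A1 \<inter> A2 = {} \<and> partial_transversal I F A1 \<and> partial_transversal J G A2)"
proof
  assume "partial_transversal (I <+> J) (case_sum F G) A"
  then obtain h where h: "matching (I <+> J) (case_sum F G) A h"
    using partial_transversal_iff_matching by blast
  have "A = {a \<in> A. isl (h a)} \<union> {a \<in> A. \<not> isl (h a)}"
    and "{a \<in> A. isl (h a)} \<inter> {a \<in> A. \<not> isl (h a)} = {}" by auto
  with matching_Plus_Inl[OF h] matching_Plus_Inr[OF h]
  show "\<exists>A1 A2. A = A1 \<union> A2 \<and> A1 \<inter> A2 = {} \<and> partial_transversal I F A1 \<and>
      partial_transversal J G A2"
    unfolding partial_transversal_iff_matching by blast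
next
  assume "\<exists>A1 A2. A = A1 \<union> A2 \<and> A1 \<inter> A2 = {} \<and> partial_transversal I F A1 \<and>
      partial_transversal J G A2"
  then obtain A1 A2 f1 f2 where A: "A = A1 \<union> A2"
    and f1: "matching I F A1 f1" and f2: "matching J G A2 f2"
    unfolding partial_transversal_iff_matching by blast
  define h where "h a = (if a \<in> A1 then Inl (f1 a) else Inr (f2 a))" for a
  have "inj_on h A"
  proof (rule inj_onI)
    fix a b assume "a \<in> A" "b \<in> A" "h a = h b"
    then show "a = b"
      using A f1 f2 unfolding h_def matching_def by (auto split: if_splits dest: inj_onD)
  qed
  moreover have "h ` A \<subseteq> I <+> J" "\<forall>a\<in>A. a \<in> case_sum F G (h a)"
    using A f1 f2 unfolding h_def matching_def by auto
  ultimately show "partial_transversal (I <+> J) (case_sum F G) A"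
    unfolding partial_transversal_iff_matching matching_def by blast
qed

lemma partial_transversal_Un_common:
  assumes "finite J" "finite A"
  shows "partial_transversal J (\<lambda>j. F j \<union> C) A \<longleftrightarrow>
    partial_transversal J F (A - C) \<and> card A \<le> card J"
proof
  assume "partial_transversal J (\<lambda>j. F j \<union> C) A"
  then obtain h where h: "matching J (\<lambda>j. F j \<union> C) A h"
    using partial_transversal_iff_matching by blast
  then have "matching J F (A - C) h" unfolding matching_def by (auto intro: inj_on_subset)
  moreover have "card A \<le> card J"
    using card_mono[OF assms(1)] matching_card_image[OF h] h unfolding matching_def by metis
  ultimately show "partial_transversal J F (A - C) \<and> card A \<le> card J"
    using partial_transversal_iff_matching by blast
next
  assume "partial_transversal J F (A - C) \<and> card A \<le> card J"
  then obtain f where f: "matching J F (A - C) f" and card_A: "card A \<le> card J"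
    using partial_transversal_iff_matching by blast
  have "f ` (A - C) \<subseteq> J" using f unfolding matching_def by blast
  then have "card (J - f ` (A - C)) = card J - card (A - C)"
    using card_Diff_subset[OF finite_subset[OF _ assms(1)]] matching_card_image[OF f] by simp
  moreover have "card A = card (A - C) + card (A \<inter> C)"
    using card_Un_disjoint[of "A - C" "A \<inter> C"] assms(2) by (simp add: Un_Diff_Int) blast
  ultimately have "card (A \<inter> C) \<le> card (J - f ` (A - C))" using card_A by linarith
  then obtain g where g: "g ` (A \<inter> C) \<subseteq> J - f ` (A - C)" "inj_on g (A \<inter> C)"
    using card_le_inj[of "A \<inter> C" "J - f ` (A - C)"] assms by blast
  define h where "h a = (if a \<in> C then g a else f a)" for a
  have "inj_on h A"
  proof (rule inj_onI)
    fix a b assume "a \<in> A" "b \<in> A" "h a = h b"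
    then show "a = b"
      using f g unfolding h_def matching_def by (auto split: if_splits dest: inj_onD)
  qed
  moreover have "h ` A \<subseteq> J" "\<forall>a\<in>A. a \<in> F (h a) \<union> C"
    using f g unfolding h_def matching_def by auto
  ultimately show "partial_transversal J (\<lambda>j. F j \<union> C) A"
    unfolding partial_transversal_iff_matching matching_def by blast
qed

lemma partial_transversal_reindex:
  assumes "inj_on e I" "\<And>i. i \<in> I \<Longrightarrow> G (e i) = F i"
  shows "partial_transversal (e ` I) G A \<longleftrightarrow> partial_transversal I F A"
proof
  assume "partial_transversal (e ` I) G A"
  then obtain h where h: "matching (e ` I) G A h" using partial_transversal_iff_matching by blast
  have "matching I F A (the_inv_into I e \<circ> h)"
    unfolding matching_def
  proof (intro conjI ballI)
    have h_img: "h ` A \<subseteq> e ` I" using h unfolding matching_def by blast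
    show "inj_on (the_inv_into I e \<circ> h) A"
      using comp_inj_on[OF _ inj_on_subset[OF inj_on_the_inv_into[OF assms(1)] h_img]] h
      unfolding matching_def by blast
    show "(the_inv_into I e \<circ> h) ` A \<subseteq> I"
      using h_img the_inv_into_into[OF assms(1)] by fastforce
    show "a \<in> F ((the_inv_into I e \<circ> h) a)" if "a \<in> A" for a
      using h that h_img assms f_the_inv_into_f[OF assms(1)] the_inv_into_into[OF assms(1)]
      unfolding matching_def by (metis comp_apply image_subset_iff order_refl)
  qed
  then show "partial_transversal I F A" using partial_transversal_iff_matching by blast
next
  assume "partial_transversal I F A"
  then obtain f where "matching I F A f" using partial_transversal_iff_matching by blast
  then have "matching (e ` I) G A (e \<circ> f)"
    using assms unfolding matching_def by (auto intro: comp_inj_on inj_on_subset)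
  then show "partial_transversal (e ` I) G A" using partial_transversal_iff_matching by blast
qed

context
  fixes S T :: "'a set" and indM indN :: "'a set \<Rightarrow> bool"
    and J :: "'j set" and F :: "'j \<Rightarrow> 'a set" and I :: "'i set" and G :: "'i \<Rightarrow> 'a set"
  assumes finite: "finite S" "finite T" and disjoint: "S \<inter> T = {}"
    and indM: "\<And>A. indM A \<longleftrightarrow> A \<subseteq> S \<and> partial_transversal J F A"
    and finite_J: "finite J" and card_J: "card J = mrank indM S"
    and indN: "\<And>A. indN A \<longleftrightarrow> A \<subseteq> T \<and> partial_transversal I G A"
    and G_T: "\<forall>i\<in>I. G i \<subseteq> T"
begin

lemmas matroid_M = matroid_partial_transversals[OF finite(1) indM]
   and matroid_N = matroid_partial_transversals[OF finite(2) indN]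

lemma free_product_imp_partial_transversal:
  assumes "free_product S indM T indN A"
  shows "partial_transversal (J <+> I) (case_sum (\<lambda>j. F j \<union> T) G) A"
proof -
  have A: "A \<subseteq> S \<union> T" and indep_S: "indM (A \<inter> S)"
    and nullity: "mnullity indN (A \<inter> T) \<le> mlambda S indM (A \<inter> S)"
    using assms unfolding free_product_def by auto
  obtain P where P: "P \<subseteq> A \<inter> T" "indN P" "card P = mrank indN (A \<inter> T)"
    using obtain_indep_card_mrank[OF matroid_N] by metis
  have fin_AT: "finite (A \<inter> T)" using finite(2) by simp
  have "card (A \<inter> T - P) = mnullity indN (A \<inter> T)"
    using card_Diff_subset[OF finite_subset[OF P(1) fin_AT] P(1)] P(3) unfolding mnullity_def by simp
  moreover have "mlambda S indM (A \<inter> S) = card J - card (A \<inter> S)"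
    using card_J mrank_indep[OF matroid_M indep_S] unfolding mlambda_def by simp
  moreover have "card (A \<inter> S) \<le> card J"
    using card_le_mrank[OF matroid_M _ indep_S] card_J by simp
  moreover have "A - P = (A \<inter> S) \<union> (A \<inter> T - P)" "(A \<inter> S) \<inter> (A \<inter> T - P) = {}"
    using A P(1) disjoint by blast+
  ultimately have "card (A - P) \<le> card J"
    using nullity card_Un_disjoint[of "A \<inter> S" "A \<inter> T - P"] finite by simp
  moreover have "finite (A - P)" using A finite by (meson Diff_subset finite_UnI finite_subset subset_trans)
  moreover have "A - P - T = A \<inter> S" using A P(1) disjoint by blast
  then have "partial_transversal J F (A - P - T)" using indep_S indM by simp
  ultimately have "partial_transversal J (\<lambda>j. F j \<union> T) (A - P)"
    using partial_transversal_Un_common[OF finite_J] by blast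
  moreover have "partial_transversal I G P" using P(2) indN by blast
  moreover have "A = (A - P) \<union> P" "(A - P) \<inter> P = {}" using P(1) by auto
  ultimately show ?thesis unfolding partial_transversal_Plus by blast
qed

lemma partial_transversal_imp_free_product:
  assumes A: "A \<subseteq> S \<union> T" and "partial_transversal (J <+> I) (case_sum (\<lambda>j. F j \<union> T) G) A"
  shows "free_product S indM T indN A"
proof -
  obtain A1 A2 where A12: "A = A1 \<union> A2" "A1 \<inter> A2 = {}"
    and A1: "partial_transversal J (\<lambda>j. F j \<union> T) A1" and A2: "partial_transversal I G A2"
    using assms(2) unfolding partial_transversal_Plus by blast
  have "A2 \<subseteq> T" using partial_transversal_subset_Union[OF A2] G_T by blast
  have "finite A1" using A A12(1) finite by (meson Un_upper1 finite_UnI finite_subset subset_trans)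
  then have A1_S: "partial_transversal J F (A1 - T)" and card_A1: "card A1 \<le> card J"
    using A1 partial_transversal_Un_common[OF finite_J] by blast+
  have "A \<inter> S = A1 - T" using A A12(1) \<open>A2 \<subseteq> T\<close> disjoint by blast
  then have indep_S: "indM (A \<inter> S)" using A1_S indM[of "A \<inter> S"] by (metis Int_lower2)
  have "card A2 \<le> mrank indN (A \<inter> T)"
  proof (rule card_le_mrank[OF matroid_N])
    show "A2 \<subseteq> A \<inter> T" using A12(1) \<open>A2 \<subseteq> T\<close> by blast
    show "indN A2" using A2 indN \<open>A2 \<subseteq> T\<close> by blast
  qed
  moreover have "card (A \<inter> T) = card (A1 \<inter> T) + card A2"
  proof -
    have "A \<inter> T = (A1 \<inter> T) \<union> A2" "(A1 \<inter> T) \<inter> A2 = {}" using A12 \<open>A2 \<subseteq> T\<close> by blast+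
    moreover have "finite A2" using finite_subset[OF \<open>A2 \<subseteq> T\<close> finite(2)] .
    ultimately show ?thesis using card_Un_disjoint[of "A1 \<inter> T" A2] finite(2) by simp
  qed
  moreover have "card A1 = card (A1 - T) + card (A1 \<inter> T)"
    using card_Un_disjoint[of "A1 - T" "A1 \<inter> T"] \<open>finite A1\<close> by (simp add: Un_Diff_Int) blast
  moreover have "mlambda S indM (A \<inter> S) = card J - card (A1 - T)"
    using card_J mrank_indep[OF matroid_M indep_S] \<open>A \<inter> S = A1 - T\<close> unfolding mlambda_def by simp
  ultimately have "mnullity indN (A \<inter> T) \<le> mlambda S indM (A \<inter> S)"
    using card_A1 unfolding mnullity_def by linarith
  then show ?thesis unfolding free_product_def using A indep_S by blast
qed

lemma free_product_iff_partial_transversal: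
  "free_product S indM T indN A \<longleftrightarrow>
    A \<subseteq> S \<union> T \<and> partial_transversal (J <+> I) (case_sum (\<lambda>j. F j \<union> T) G) A"
  using free_product_imp_partial_transversal partial_transversal_imp_free_product
  unfolding free_product_def by blast

end

theorem proposition4p13:
  fixes S T :: "'a set" and indM indN :: "'a set \<Rightarrow> bool"
  assumes "finite S" and "finite T" and "S \<inter> T = {}"
    and "matroid S indM" and "matroid T indN"
    and "transversal_matroid S indM" and "transversal_matroid T indN"
  shows "transversal_matroid (S \<union> T) (free_product S indM T indN)"
proof -
  obtain J :: "nat set" and F where J: "finite J" "card J = mrank indM S" "\<forall>j\<in>J. F j \<subseteq> S"
    and indM: "\<And>A. indM A \<longleftrightarrow> A \<subseteq> S \<and> partial_transversal J F A"
    using transversal_matroid_rank_presentation[OF assms(6)] by blast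
  obtain I :: "nat set" and G where G: "\<forall>i\<in>I. G i \<subseteq> T"
    and indN: "\<And>A. indN A \<longleftrightarrow> A \<subseteq> T \<and> partial_transversal I G A"
    using assms(7) unfolding transversal_matroid_def by blast
  \<comment> \<open>\<open>transversal_matroid\<close> requires the index set to be a set of naturals\<close>
  define H where "H = case_sum (\<lambda>j. F j \<union> T) G \<circ> from_nat"
  have "partial_transversal (to_nat ` (J <+> I)) H A \<longleftrightarrow>
      partial_transversal (J <+> I) (case_sum (\<lambda>j. F j \<union> T) G) A" for A
    by (rule partial_transversal_reindex) (simp_all add: H_def)
  then have free_product: "free_product S indM T indN A \<longleftrightarrow>
      A \<subseteq> S \<union> T \<and> partial_transversal (to_nat ` (J <+> I)) H A" for A
    using free_product_iff_partial_transversal[OF assms(1-3) indM J(1,2) indN G] by simp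
  have H_sub: "\<forall>k\<in>to_nat ` (J <+> I). H k \<subseteq> S \<union> T"
    using J(3) G unfolding H_def by (auto split: sum.split)
  have "matroid (S \<union> T) (free_product S indM T indN)"
    using matroid_partial_transversals free_product assms(1,2) by blast
  with free_product H_sub show ?thesis unfolding transversal_matroid_def by blast
qed

end
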